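(* For all $v,w,u\in W$, \[ \pi\bullet\big(\zeta(v)_{I_w}\cdot(\delta_v\odot\zeta^\vee_{I_u})\big)=\delta^{Kr}_{w,u}\,\mathbf 1, \] i.e. $\delta_v\odot\zeta^\vee_{I_w}$ is the Poincaré dual $\zeta(v)^\vee_{I_w}$ of $\zeta(v)_{I_w}$; in particular, for each fixed $v\in W$ the classes $\{\delta_v\odot\zeta^\vee_{I_w}\}_{w\in W}$ form an $S$-basis of $Z$.
   Context: Let $\Phi$ be a finite real root system with simple roots $\Pi$, positive roots $\Phi_+$, negative roots $\Phi_-$, and finite Coxeter group $W$. Let $\mathcal O$ be its coefficient ring, $\Lambda$ a free $\mathcal O$-module between the root lattice $\Lambda_r$ (the $\mathcal O$-span of $\Pi$) and the weight lattice $\Lambda_w=\{\lambda\in\Lambda_r\otimes K:\alpha^\vee(\lambda)\in\mathcal O\ \forall\alpha\}$. Let $F$ be a one-dimensional commutative formal group law over a commutative ring $R$, and $S$ the associated formal group ring ($R[[x_\lambda]]_{\lambda\in\Lambda}$ modulo the closure of the relations $x_0=0$, $x_{\lambda+\mu}=F(x_\lambda,x_\mu)$; no completion for polynomial $F$; in the non-crystallographic case $F$ additive, $R=\mathcal O$, $S=\mathrm{Sym}_{\mathcal O}(\Lambda)$), with $W$ acting via $w(x_\lambda)=x_{w(\lambda)}$. Assume all $x_\alpha$ regular and that for distinct positive roots $\alpha,\alpha'$, $x_\alpha\mid x_{\alpha'}f\Rightarrow x_\alpha\mid f$. $Q=S[1/x_\alpha]$, $Q_W$ the twisted group algebra with basis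 $\delta_w$ and $\delta_wq=w(q)\delta_w$; $Y_\alpha=\frac1{x_{-\alpha}}+\frac1{x_\alpha}\delta_{s_\alpha}$, $Y_i=Y_{\alpha_i}$. For each $w$ fix a reduced word $I_w=(i_1,\dots,i_l)$, $Y_{I_w}=Y_{i_1}\cdots Y_{i_l}$, $I_w^{-1}$ the reversed word. The Demazure algebra $\mathbb D\subset Q_W$ is the $R$-subalgebra generated by $S$ and the $Y_i$; it is a free left $S$-module with basis $\{Y_{I_w}\}$. Structure algebra $Z=\{(z_v)_{v\in W}\in\bigoplus_vS: z_{s_\alpha w}-z_w\in x_\alpha S\ \forall w,\ \alpha\in\Phi_+\}$ (coordinatewise product). It is known that $Z$ is the image of the injective map $\mathrm{Hom}_S(\mathbb D,S)\to\bigoplus_vS$, $\phi\mapsto(\phi(\delta_v))_v$. Hecke action $q\delta_w\bullet(z_v)_v=(v(q)z_{vw})_v$; Weyl action $q\delta_w\odot(z_v)_v=(q\,w(z_{w^{-1}v}))_v$. $\mathbf 1=(1)_v$; $x_\Pi=\prod_{\alpha\in\Phi_-}x_\alpha$; $[e]$ has $e$-coordinate $x_\Pi$ and other coordinates $0$; $[v]=\delta_v\odot[e]$; $\zeta(v)_{I_w}=Y_{I_w^{-1}}\bullet[v]$, $\zeta_{I_w}=\zeta(e)_{I_w}$. $\pi=\sum_w\frac1{w(x_\Pi)}\delta_w$ acting by $\bullet$. $\zeta^\vee_{I_w}\in Z$ is the element corresponding to the $S$-linear functional on $\mathbb D$ with $Y_{I_u}\mapsto\delta^{Kr}_{w,u}$;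 it is known that $\{\zeta^\vee_{I_w}\}$ is an $S$-basis of $Z$ and $\pi\bullet(\zeta_{I_w}\cdot\zeta^\vee_{I_u})=\delta^{Kr}_{w,u}\mathbf 1$. *)

theory Defs
  imports "HOL-Analysis.Analysis" "HOL-Library.FuncSet"
begin

definition refl :: "'v::real_inner \<Rightarrow> 'v \<Rightarrow> 'v" where
  "refl \<alpha> = (\<lambda>\<mu>. \<mu> - (2 * (\<mu> \<bullet> \<alpha>) / (\<alpha> \<bullet> \<alpha>)) *\<^sub>R \<alpha>)"

definition root_system :: "'v::euclidean_space set \<Rightarrow> bool" where
  "root_system \<Phi> \<longleftrightarrow> finite \<Phi> \<and> span \<Phi> = UNIV \<and> 0 \<notin> \<Phi> \<and>
     (\<forall>\<alpha>\<in>\<Phi>. refl \<alpha> ` \<Phi> = \<Phi>) \<and>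
     (\<forall>\<alpha>\<in>\<Phi>. \<forall>c::real. c *\<^sub>R \<alpha> \<in> \<Phi> \<longleftrightarrow> c = 1 \<or> c = -1)"

definition simple_system :: "'v::euclidean_space set \<Rightarrow> 'v set \<Rightarrow> bool" where
  "simple_system \<Phi> \<Delta> \<longleftrightarrow> \<Delta> \<subseteq> \<Phi> \<and> independent \<Delta> \<and>
     (\<forall>\<alpha>\<in>\<Phi>. \<exists>c. \<alpha> = (\<Sum>\<beta>\<in>\<Delta>. c \<beta> *\<^sub>R \<beta>) \<and>
                 ((\<forall>\<beta>\<in>\<Delta>. 0 \<le> c \<beta>) \<or> (\<forall>\<beta>\<in>\<Delta>. c \<beta> \<le> 0)))"

definition pos_roots :: "'v::euclidean_space set \<Rightarrow> 'v set \<Rightarrow> 'v set" where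
  "pos_roots \<Phi> \<Delta> = {\<alpha>\<in>\<Phi>. \<exists>c. \<alpha> = (\<Sum>\<beta>\<in>\<Delta>. c \<beta> *\<^sub>R \<beta>) \<and> (\<forall>\<beta>\<in>\<Delta>. 0 \<le> c \<beta>)}"

definition neg_roots :: "'v::euclidean_space set \<Rightarrow> 'v set \<Rightarrow> 'v set" where
  "neg_roots \<Phi> \<Delta> = {\<alpha>\<in>\<Phi>. \<exists>c. \<alpha> = (\<Sum>\<beta>\<in>\<Delta>. c \<beta> *\<^sub>R \<beta>) \<and> (\<forall>\<beta>\<in>\<Delta>. c \<beta> \<le> 0)}"

definition refl_word :: "'v::real_inner list \<Rightarrow> 'v \<Rightarrow> 'v" where
  "refl_word l = foldr (\<lambda>\<alpha> f. refl \<alpha> \<circ> f) l id"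

definition weyl_group :: "'v::real_inner set \<Rightarrow> ('v \<Rightarrow> 'v) set" where
  "weyl_group \<Phi> = {refl_word l | l. set l \<subseteq> \<Phi>}"

definition reduced_word :: "'v::real_inner set \<Rightarrow> ('v \<Rightarrow> 'v) \<Rightarrow> 'v list \<Rightarrow> bool" where
  "reduced_word \<Delta> w l \<longleftrightarrow> set l \<subseteq> \<Delta> \<and> refl_word l = w \<and>
     (\<forall>l'. set l' \<subseteq> \<Delta> \<and> refl_word l' = w \<longrightarrow> length l \<le> length l')"

definition qinv :: "'q::comm_ring_1 \<Rightarrow> 'q" where
  "qinv a = (THE b. a * b = 1)"

text \<open>Elements of Q_W are coefficient functions  a : W -> Q  (a = sum_w a(w) delta_w).
  Product: (a delta_w)(b delta_u) = a w(b) delta_{wu}.\<close>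
definition qw_mult :: "('v \<Rightarrow> 'v) set \<Rightarrow> (('v \<Rightarrow> 'v) \<Rightarrow> 'q \<Rightarrow> 'q) \<Rightarrow>
    (('v \<Rightarrow> 'v) \<Rightarrow> 'q::comm_ring_1) \<Rightarrow> (('v \<Rightarrow> 'v) \<Rightarrow> 'q) \<Rightarrow> (('v \<Rightarrow> 'v) \<Rightarrow> 'q)" where
  "qw_mult W act a b = (\<lambda>y. \<Sum>w\<in>W. \<Sum>u\<in>W. if w \<circ> u = y then a w * act w (b u) else 0)"

definition qw_delta :: "('v \<Rightarrow> 'v) \<Rightarrow> (('v \<Rightarrow> 'v) \<Rightarrow> 'q::comm_ring_1)" where
  "qw_delta w = (\<lambda>y. if y = w then 1 else 0)"

definition Y_elt :: "('v::real_inner \<Rightarrow> 'q::comm_ring_1) \<Rightarrow> 'v \<Rightarrow> (('v \<Rightarrow> 'v) \<Rightarrow> 'q)" where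
  "Y_elt x \<alpha> = (\<lambda>y. if y = id then qinv (x (-\<alpha>)) else if y = refl \<alpha> then qinv (x \<alpha>) else 0)"

definition Y_word :: "('v::real_inner \<Rightarrow> 'v) set \<Rightarrow> (('v \<Rightarrow> 'v) \<Rightarrow> 'q \<Rightarrow> 'q) \<Rightarrow>
    ('v \<Rightarrow> 'q::comm_ring_1) \<Rightarrow> 'v list \<Rightarrow> (('v \<Rightarrow> 'v) \<Rightarrow> 'q)" where
  "Y_word W act x l = foldr (\<lambda>\<alpha> b. qw_mult W act (Y_elt x \<alpha>) b) l (qw_delta id)"

definition hecke :: "('v \<Rightarrow> 'v) set \<Rightarrow> (('v \<Rightarrow> 'v) \<Rightarrow> 'q \<Rightarrow> 'q) \<Rightarrow>
    (('v \<Rightarrow> 'v) \<Rightarrow> 'q::comm_ring_1) \<Rightarrow> (('v \<Rightarrow> 'v) \<Rightarrow> 'q) \<Rightarrow> (('v \<Rightarrow> 'v) \<Rightarrow> 'q)" where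
  "hecke W act a z = (\<lambda>v. if v \<in> W then (\<Sum>w\<in>W. act v (a w) * z (v \<circ> w)) else 0)"

definition weyl_act :: "('v \<Rightarrow> 'v) set \<Rightarrow> (('v \<Rightarrow> 'v) \<Rightarrow> 'q \<Rightarrow> 'q) \<Rightarrow>
    (('v \<Rightarrow> 'v) \<Rightarrow> 'q::comm_ring_1) \<Rightarrow> (('v \<Rightarrow> 'v) \<Rightarrow> 'q) \<Rightarrow> (('v \<Rightarrow> 'v) \<Rightarrow> 'q)" where
  "weyl_act W act a z = (\<lambda>v. if v \<in> W then
      (\<Sum>w\<in>W. \<Sum>u\<in>W. if w \<circ> u = v then a w * act w (z u) else 0) else 0)"

definition cw_mult :: "('w \<Rightarrow> 'q::comm_ring_1) \<Rightarrow> ('w \<Rightarrow> 'q) \<Rightarrow> ('w \<Rightarrow> 'q)" where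
  "cw_mult z z' = (\<lambda>v. z v * z' v)"

definition one_tuple :: "'w set \<Rightarrow> ('w \<Rightarrow> 'q::comm_ring_1)" where
  "one_tuple W = (\<lambda>v. if v \<in> W then 1 else 0)"

definition xPi :: "'v::euclidean_space set \<Rightarrow> 'v set \<Rightarrow> ('v \<Rightarrow> 'q::comm_ring_1) \<Rightarrow> 'q" where
  "xPi \<Phi> \<Delta> x = (\<Prod>\<alpha>\<in>neg_roots \<Phi> \<Delta>. x \<alpha>)"

text \<open>[e]: e-coordinate x_Pi, other coordinates 0.\<close>
definition pt_e :: "'q::comm_ring_1 \<Rightarrow> (('v \<Rightarrow> 'v) \<Rightarrow> 'q)" where
  "pt_e c = (\<lambda>v. if v = id then c else 0)"

definition pt :: "('v \<Rightarrow> 'v) set \<Rightarrow> (('v \<Rightarrow> 'v) \<Rightarrow> 'q \<Rightarrow> 'q) \<Rightarrow> 'q::comm_ring_1 \<Rightarrow>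
    ('v \<Rightarrow> 'v) \<Rightarrow> (('v \<Rightarrow> 'v) \<Rightarrow> 'q)" where
  "pt W act c v = weyl_act W act (qw_delta v) (pt_e c)"

text \<open>zeta(v)_{I_w} = Y_{I_w^{-1}} . [v]; here I is the chosen family of reduced words.\<close>
definition zeta :: "('v::real_inner \<Rightarrow> 'v) set \<Rightarrow> (('v \<Rightarrow> 'v) \<Rightarrow> 'q \<Rightarrow> 'q) \<Rightarrow> ('v \<Rightarrow> 'q::comm_ring_1) \<Rightarrow>
    'q \<Rightarrow> (('v \<Rightarrow> 'v) \<Rightarrow> 'v list) \<Rightarrow> ('v \<Rightarrow> 'v) \<Rightarrow> ('v \<Rightarrow> 'v) \<Rightarrow> (('v \<Rightarrow> 'v) \<Rightarrow> 'q)" where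
  "zeta W act x c I v w = hecke W act (Y_word W act x (rev (I w))) (pt W act c v)"

definition pi_elt :: "('v \<Rightarrow> 'v) set \<Rightarrow> (('v \<Rightarrow> 'v) \<Rightarrow> 'q \<Rightarrow> 'q) \<Rightarrow> 'q::comm_ring_1 \<Rightarrow>
    (('v \<Rightarrow> 'v) \<Rightarrow> 'q)" where
  "pi_elt W act c = (\<lambda>w. if w \<in> W then qinv (act w c) else 0)"

text \<open>zeta^vee_{I_w}: the tuple (phi_w(delta_v))_v for the S-linear functional phi_w on the
  Demazure algebra with Y_{I_u} |-> Kronecker(w,u).  Since delta_v = sum_u a_{v,u} Y_{I_u}
  (unique expansion, the Y_{I_u} being a basis), phi_w(delta_v) = a_{v,w}.\<close>
definition zeta_dual :: "('v::real_inner \<Rightarrow> 'v) set \<Rightarrow> (('v \<Rightarrow> 'v) \<Rightarrow> 'q \<Rightarrow> 'q) \<Rightarrow>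
    ('v \<Rightarrow> 'q::comm_ring_1) \<Rightarrow> (('v \<Rightarrow> 'v) \<Rightarrow> 'v list) \<Rightarrow> ('v \<Rightarrow> 'v) \<Rightarrow> (('v \<Rightarrow> 'v) \<Rightarrow> 'q)" where
  "zeta_dual W act x I w = (\<lambda>v. if v \<in> W then
      (THE a. a \<in> extensional W \<and>
              qw_delta v = (\<lambda>y. \<Sum>u\<in>W. a u * Y_word W act x (I u) y)) w
    else 0)"

definition structure_algebra :: "('v::real_inner \<Rightarrow> 'v) set \<Rightarrow> 'v set \<Rightarrow> 'q::comm_ring_1 set \<Rightarrow>
    ('v \<Rightarrow> 'q) \<Rightarrow> (('v \<Rightarrow> 'v) \<Rightarrow> 'q) set" where
  "structure_algebra W P S x = {z. (\<forall>v. v \<notin> W \<longrightarrow> z v = 0) \<and> (\<forall>v\<in>W. z v \<in> S) \<and>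
      (\<forall>w\<in>W. \<forall>\<alpha>\<in>P. \<exists>s\<in>S. z (refl \<alpha> \<circ> w) - z w = x \<alpha> * s)}"

definition is_S_basis :: "'q::comm_ring_1 set \<Rightarrow> 'w set \<Rightarrow> ('w \<Rightarrow> 'q) set \<Rightarrow>
    ('w \<Rightarrow> ('w \<Rightarrow> 'q)) \<Rightarrow> bool" where
  "is_S_basis S W Z b \<longleftrightarrow> (\<forall>w\<in>W. b w \<in> Z) \<and>
     (\<forall>z\<in>Z. \<exists>!c. c \<in> W \<rightarrow>\<^sub>E S \<and> z = (\<lambda>v. \<Sum>w\<in>W. c w * b w v))"

text \<open>S is a subring of the commutative ring Q (type 'q); Q = S[1/x_alpha | alpha in Phi];
  W acts on Q by ring automorphisms preserving S with w(x_alpha) = x_{w(alpha)};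
  x_alpha regular, x_{-alpha} an associate of x_alpha (as for any formal group law);
  the divisibility hypothesis for distinct positive roots.\<close>
definition demazure_setting :: "'v::euclidean_space set \<Rightarrow> 'v set \<Rightarrow> 'q::comm_ring_1 set \<Rightarrow>
    (('v \<Rightarrow> 'v) \<Rightarrow> 'q \<Rightarrow> 'q) \<Rightarrow> ('v \<Rightarrow> 'q) \<Rightarrow> bool" where
  "demazure_setting \<Phi> \<Delta> S act x \<longleftrightarrow>
     root_system \<Phi> \<and> simple_system \<Phi> \<Delta> \<and>
     0 \<in> S \<and> 1 \<in> S \<and> (\<forall>a\<in>S. \<forall>b\<in>S. a + b \<in> S \<and> a * b \<in> S \<and> - a \<in> S) \<and>
     (\<forall>\<alpha>\<in>\<Phi>. x \<alpha> \<in> S \<and> (\<exists>b. x \<alpha> * b = 1)) \<and>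
     (\<forall>q. \<exists>s\<in>S. \<exists>n::nat. q * (\<Prod>\<alpha>\<in>\<Phi>. x \<alpha>) ^ n = s) \<and>
     (\<forall>\<alpha>\<in>\<Phi>. \<forall>f\<in>S. x \<alpha> * f = 0 \<longrightarrow> f = 0) \<and>
     (\<forall>\<alpha>\<in>\<Phi>. \<exists>u\<in>S. (\<exists>u'\<in>S. u * u' = 1) \<and> x (- \<alpha>) = u * x \<alpha>) \<and>
     (\<forall>w\<in>weyl_group \<Phi>. (\<forall>a b. act w (a + b) = act w a + act w b \<and> act w (a * b) = act w a * act w b)
          \<and> act w 1 = 1 \<and> act w ` S \<subseteq> S \<and> (\<forall>\<alpha>\<in>\<Phi>. act w (x \<alpha>) = x (w \<alpha>))) \<and>
     act id = id \<and>
     (\<forall>w\<in>weyl_group \<Phi>. \<forall>u\<in>weyl_group \<Phi>. act (w \<circ> u) = act w \<circ> act u) \<and>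
     (\<forall>\<alpha>\<in>pos_roots \<Phi> \<Delta>. \<forall>\<alpha>'\<in>pos_roots \<Phi> \<Delta>. \<alpha> \<noteq> \<alpha>' \<longrightarrow>
        (\<forall>f\<in>S. (\<exists>g\<in>S. x \<alpha>' * f = x \<alpha> * g) \<longrightarrow> (\<exists>g\<in>S. f = x \<alpha> * g)))"

end

theory Submission
  imports Defs
begin

(* The Weyl action of delta_v is z |-> (v(z_{v^-1 v'}))_{v'}. It is multiplicative,
   commutes with the Hecke action, fixes 1 and sends [e] to [v], hence zeta_{I_w} to
   zeta(v)_{I_w}; applied to the known duality between zeta_{I_w} and zeta^vee_{I_u} it
   gives the first claim. Since v s_beta v^-1 = s_{v beta} and v(x_beta) = x_{v beta},
   and the divisibility conditions defining Z hold for all roots (x_{-beta} is an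
   associate of x_beta), it maps Z into itself. Being invertible, with inverse the action
   of delta_{v^-1}, and semilinear along the automorphism v of S, it carries S-bases of Z
   to S-bases. *)

lemma refl_word_Nil [simp]: "refl_word [] = id"
  by (simp add: refl_word_def)

lemma refl_word_Cons [simp]: "refl_word (\<alpha> # l) = refl \<alpha> \<circ> refl_word l"
  by (simp add: refl_word_def)

lemma refl_word_append: "refl_word (l @ l') = refl_word l \<circ> refl_word l'"
  by (induction l) auto

(* Since 0 / 0 = 0, refl 0 is the identity; so the facts below need no hypothesis \<alpha> \<noteq> 0. *)
lemma refl_zero: "refl 0 = id"
  by (simp add: refl_def fun_eq_iff)

lemma refl_uminus [simp]: "refl (- \<alpha>) = refl \<alpha>"
  by (simp add: refl_def fun_eq_iff)

lemma refl_refl: "refl \<alpha> \<circ> refl \<alpha> = id"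
proof (cases "\<alpha> = 0")
  case False
  then have "refl \<alpha> \<mu> \<bullet> \<alpha> = - (\<mu> \<bullet> \<alpha>)" for \<mu>
    by (simp add: refl_def inner_diff_left)
  then show ?thesis
    by (simp add: fun_eq_iff refl_def[of \<alpha>])
qed (simp add: refl_zero)

lemma orthogonal_transformation_refl: "orthogonal_transformation (refl \<alpha>)"
  unfolding orthogonal_transformation_def
proof
  show "linear (refl \<alpha>)"
    unfolding refl_def
    by (intro linearI) (auto simp: inner_add_left algebra_simps add_divide_distrib)
  show "\<forall>\<mu> \<nu>. refl \<alpha> \<mu> \<bullet> refl \<alpha> \<nu> = \<mu> \<bullet> \<nu>"
    by (cases "\<alpha> = 0")
      (simp_all add: refl_zero refl_def inner_diff_left inner_diff_right algebra_simps inner_commute)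
qed

lemma orthogonal_transformation_refl_word: "orthogonal_transformation (refl_word l)"
proof (induction l)
  case Nil
  show ?case
    by (simp add: id_def)
next
  case (Cons \<alpha> l)
  show ?case
    unfolding refl_word_Cons
    by (rule orthogonal_transformation_compose[OF orthogonal_transformation_refl Cons.IH])
qed

lemma refl_word_rev_comp: "refl_word (rev l) \<circ> refl_word l = id"
proof (induction l)
  case (Cons \<alpha> l)
  have "refl_word (rev (\<alpha> # l)) \<circ> refl_word (\<alpha> # l)
      = refl_word (rev l) \<circ> (refl \<alpha> \<circ> refl \<alpha>) \<circ> refl_word l"
    by (simp add: refl_word_append o_assoc)
  also have "\<dots> = id"
    using Cons.IH by (simp only: refl_refl o_id)
  finally show ?case .
qed simp

lemma orthogonal_transformation_comp_refl:
  assumes "orthogonal_transformation f"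
  shows "f \<circ> refl \<beta> = refl (f \<beta>) \<circ> f"
proof
  fix \<mu>
  have "f (refl \<beta> \<mu>) = f \<mu> - (2 * (\<mu> \<bullet> \<beta>) / (\<beta> \<bullet> \<beta>)) *\<^sub>R f \<beta>"
    using assms unfolding refl_def orthogonal_transformation_def by (simp add: linear_diff linear_scale)
  also have "\<dots> = refl (f \<beta>) (f \<mu>)"
    using assms unfolding refl_def orthogonal_transformation_def by simp
  finally show "(f \<circ> refl \<beta>) \<mu> = (refl (f \<beta>) \<circ> f) \<mu>"
    by simp
qed

lemma id_in_weyl_group: "id \<in> weyl_group \<Phi>"
  unfolding weyl_group_def by (auto intro!: exI[of _ "[]"])

lemma refl_in_weyl_group: "\<alpha> \<in> \<Phi> \<Longrightarrow> refl \<alpha> \<in> weyl_group \<Phi>"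
  unfolding weyl_group_def by (auto intro!: exI[of _ "[\<alpha>]"])

lemma comp_in_weyl_group:
  assumes "v \<in> weyl_group \<Phi>" and "w \<in> weyl_group \<Phi>"
  shows "v \<circ> w \<in> weyl_group \<Phi>"
proof -
  obtain l l' where "set l \<subseteq> \<Phi>" "v = refl_word l" "set l' \<subseteq> \<Phi>" "w = refl_word l'"
    using assms unfolding weyl_group_def by blast
  then show ?thesis
    unfolding weyl_group_def by (auto simp: refl_word_append intro!: exI[of _ "l @ l'"])
qed

lemma orthogonal_transformation_weyl_group:
  "w \<in> weyl_group \<Phi> \<Longrightarrow> orthogonal_transformation w"
  unfolding weyl_group_def using orthogonal_transformation_refl_word by blast

lemma inv_in_weyl_group: "w \<in> weyl_group \<Phi> \<Longrightarrow> inv w \<in> weyl_group \<Phi>"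
proof -
  assume "w \<in> weyl_group \<Phi>"
  then obtain l where l: "set l \<subseteq> \<Phi>" "w = refl_word l"
    unfolding weyl_group_def by blast
  have "inv w = refl_word (rev l)"
    using refl_word_rev_comp[of l] refl_word_rev_comp[of "rev l"] l(2)
    by (intro inv_unique_comp) simp_all
  then show ?thesis
    using l(1) unfolding weyl_group_def by (auto intro!: exI[of _ "rev l"])
qed

lemma bij_weyl_group: "w \<in> weyl_group (\<Phi> :: 'v::euclidean_space set) \<Longrightarrow> bij w"
  by (simp add: orthogonal_transformation_bij orthogonal_transformation_weyl_group)

lemma weyl_group_comp_inv:
  assumes "w \<in> weyl_group (\<Phi> :: 'v::euclidean_space set)"
  shows "w \<circ> inv w = id" and "inv w \<circ> w = id"
  using bij_weyl_group[OF assms] by (simp_all add: bij_is_inj bij_is_surj surj_iff[symmetric])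

lemma weyl_group_permutes_roots:
  assumes "root_system \<Phi>" and "w \<in> weyl_group \<Phi>"
  shows "w ` \<Phi> = \<Phi>"
proof -
  obtain l where "set l \<subseteq> \<Phi>" "w = refl_word l"
    using assms(2) unfolding weyl_group_def by blast
  moreover have "set l \<subseteq> \<Phi> \<Longrightarrow> refl_word l ` \<Phi> = \<Phi>" for l
  proof (induction l)
    case (Cons \<alpha> l)
    have "refl_word (\<alpha> # l) ` \<Phi> = refl \<alpha> ` refl_word l ` \<Phi>"
      by (simp only: refl_word_Cons image_comp)
    then show ?case
      using Cons assms(1) unfolding root_system_def by simp
  qed simp
  ultimately show ?thesis
    by simp
qed

lemma finite_weyl_group:
  assumes "root_system \<Phi>"
  shows "finite (weyl_group \<Phi>)"
proof -
  have "inj_on (\<lambda>w. restrict w \<Phi>) (weyl_group \<Phi>)"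
  proof (rule inj_onI)
    fix v w
    assume v: "v \<in> weyl_group \<Phi>" and w: "w \<in> weyl_group \<Phi>" and "restrict v \<Phi> = restrict w \<Phi>"
    then have "\<forall>\<mu>\<in>\<Phi>. v \<mu> = w \<mu>"
      by (metis restrict_apply')
    moreover have "linear v" "linear w"
      using v w by (simp_all add: orthogonal_transformation_linear orthogonal_transformation_weyl_group)
    ultimately have "v \<mu> = w \<mu>" if "\<mu> \<in> span \<Phi>" for \<mu>
      using linear_eq_on_span that by blast
    then show "v = w"
      using assms by (auto simp: root_system_def)
  qed
  moreover have "(\<lambda>w. restrict w \<Phi>) ` weyl_group \<Phi> \<subseteq> \<Phi> \<rightarrow>\<^sub>E \<Phi>"
    using weyl_group_permutes_roots[OF assms] by fastforce
  moreover have "finite (\<Phi> \<rightarrow>\<^sub>E \<Phi>)"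
    using assms by (simp add: root_system_def finite_PiE)
  ultimately show ?thesis
    using finite_imageD finite_subset by blast
qed

lemma root_or_uminus_pos_root:
  assumes "root_system \<Phi>" and "simple_system \<Phi> \<Delta>" and "\<beta> \<in> \<Phi>"
  shows "\<beta> \<in> pos_roots \<Phi> \<Delta> \<or> - \<beta> \<in> pos_roots \<Phi> \<Delta>"
proof -
  obtain c where c: "\<beta> = (\<Sum>\<gamma>\<in>\<Delta>. c \<gamma> *\<^sub>R \<gamma>)"
    and sign: "(\<forall>\<gamma>\<in>\<Delta>. 0 \<le> c \<gamma>) \<or> (\<forall>\<gamma>\<in>\<Delta>. c \<gamma> \<le> 0)"
    using assms(2,3) unfolding simple_system_def by blast
  from sign show ?thesis
  proof
    assume "\<forall>\<gamma>\<in>\<Delta>. 0 \<le> c \<gamma>"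
    then show ?thesis
      using c assms(3) unfolding pos_roots_def by blast
  next
    assume "\<forall>\<gamma>\<in>\<Delta>. c \<gamma> \<le> 0"
    then have "\<forall>\<gamma>\<in>\<Delta>. 0 \<le> - c \<gamma>"
      by simp
    moreover have "(-1) *\<^sub>R \<beta> \<in> \<Phi>"
      using assms(1,3) unfolding root_system_def by blast
    moreover have "- \<beta> = (\<Sum>\<gamma>\<in>\<Delta>. (- c \<gamma>) *\<^sub>R \<gamma>)"
      using c by (simp add: sum_negf)
    ultimately show ?thesis
      unfolding pos_roots_def by (intro disjI2 CollectI conjI exI[of _ "\<lambda>\<gamma>. - c \<gamma>"]) simp_all
  qed
qed

lemma is_S_basis_semilinear_image:
  assumes basis: "is_S_basis S I Z b"
    and maps_to: "\<And>z. z \<in> Z \<Longrightarrow> T z \<in> Z" "\<And>z. z \<in> Z \<Longrightarrow> T' z \<in> Z"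
    and inverse: "\<And>z. z \<in> Z \<Longrightarrow> T (T' z) = z" "\<And>z. z \<in> Z \<Longrightarrow> T' (T z) = z"
    and coeff_maps_to: "\<And>s. s \<in> S \<Longrightarrow> \<sigma> s \<in> S" "\<And>s. s \<in> S \<Longrightarrow> \<sigma>' s \<in> S"
    and coeff_inverse: "\<And>s. s \<in> S \<Longrightarrow> \<sigma> (\<sigma>' s) = s"
    and semilinear: "\<And>c f. T (\<lambda>v. \<Sum>i\<in>I. c i * f i v) = (\<lambda>v. \<Sum>i\<in>I. \<sigma> (c i) * T (f i) v)"
      "\<And>c f. T' (\<lambda>v. \<Sum>i\<in>I. c i * f i v) = (\<lambda>v. \<Sum>i\<in>I. \<sigma>' (c i) * T' (f i) v)"
  shows "is_S_basis S I Z (\<lambda>i. T (b i))"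
  unfolding is_S_basis_def
proof (intro conjI ballI)
  have b: "\<forall>i\<in>I. b i \<in> Z"
    and coords: "\<forall>z\<in>Z. \<exists>!c. c \<in> I \<rightarrow>\<^sub>E S \<and> z = (\<lambda>v. \<Sum>i\<in>I. c i * b i v)"
    using basis by (simp_all add: is_S_basis_def)
  show "T (b i) \<in> Z" if "i \<in> I" for i
    using b maps_to(1) that by blast
  fix z
  assume z: "z \<in> Z"
  show "\<exists>!c. c \<in> I \<rightarrow>\<^sub>E S \<and> z = (\<lambda>v. \<Sum>i\<in>I. c i * T (b i) v)"
  proof (rule ex_ex1I)
    obtain c where c: "c \<in> I \<rightarrow>\<^sub>E S" "T' z = (\<lambda>v. \<Sum>i\<in>I. c i * b i v)"
      using coords maps_to(2)[OF z] by blast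
    have "z = T (T' z)"
      using inverse(1)[OF z] by simp
    also have "\<dots> = (\<lambda>v. \<Sum>i\<in>I. restrict (\<sigma> \<circ> c) I i * T (b i) v)"
      unfolding c(2) semilinear(1) by (auto intro!: sum.cong)
    finally show "\<exists>c. c \<in> I \<rightarrow>\<^sub>E S \<and> z = (\<lambda>v. \<Sum>i\<in>I. c i * T (b i) v)"
      using c(1) coeff_maps_to(1) by (intro exI[of _ "restrict (\<sigma> \<circ> c) I"]) (auto simp: PiE_iff)
  next
    fix c1 c2
    assume c1: "c1 \<in> I \<rightarrow>\<^sub>E S \<and> z = (\<lambda>v. \<Sum>i\<in>I. c1 i * T (b i) v)"
      and c2: "c2 \<in> I \<rightarrow>\<^sub>E S \<and> z = (\<lambda>v. \<Sum>i\<in>I. c2 i * T (b i) v)"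
    have pulled_back: "restrict (\<sigma>' \<circ> c) I \<in> I \<rightarrow>\<^sub>E S \<and>
        T' z = (\<lambda>v. \<Sum>i\<in>I. restrict (\<sigma>' \<circ> c) I i * b i v)"
      if "c \<in> I \<rightarrow>\<^sub>E S \<and> z = (\<lambda>v. \<Sum>i\<in>I. c i * T (b i) v)" for c
      using that coeff_maps_to(2) inverse(2) b by (auto simp: semilinear(2) PiE_iff intro!: sum.cong)
    have "restrict (\<sigma>' \<circ> c1) I = restrict (\<sigma>' \<circ> c2) I"
      using coords maps_to(2)[OF z] pulled_back[OF c1] pulled_back[OF c2] by blast
    then have "c1 i = c2 i" if "i \<in> I" for i
      using c1 c2 coeff_inverse that by (metis PiE_mem comp_apply restrict_apply')
    then show "c1 = c2"
      using c1 c2 PiE_ext by blast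
  qed
qed

locale demazure =
  fixes \<Phi> \<Delta> :: "'v::euclidean_space set"
    and S :: "'q::comm_ring_1 set"
    and act :: "('v \<Rightarrow> 'v) \<Rightarrow> 'q \<Rightarrow> 'q"
    and x :: "'v \<Rightarrow> 'q"
  assumes setting: "demazure_setting \<Phi> \<Delta> S act x"
begin

abbreviation W :: "('v \<Rightarrow> 'v) set" where
  "W \<equiv> weyl_group \<Phi>"

abbreviation Z :: "(('v \<Rightarrow> 'v) \<Rightarrow> 'q) set" where
  "Z \<equiv> structure_algebra W (pos_roots \<Phi> \<Delta>) S x"

abbreviation delta_act :: "('v \<Rightarrow> 'v) \<Rightarrow> (('v \<Rightarrow> 'v) \<Rightarrow> 'q) \<Rightarrow> (('v \<Rightarrow> 'v) \<Rightarrow> 'q)" where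
  "delta_act v \<equiv> weyl_act W act (qw_delta v)"

lemma root_system: "root_system \<Phi>"
  and simple_system: "simple_system \<Phi> \<Delta>"
  using setting by (simp_all add: demazure_setting_def)

lemma S_mult_closed: "a \<in> S \<Longrightarrow> b \<in> S \<Longrightarrow> a * b \<in> S"
  using setting unfolding demazure_setting_def by (elim conjE) blast

lemma x_uminus:
  assumes "\<alpha> \<in> \<Phi>"
  shows "\<exists>u\<in>S. x (- \<alpha>) = u * x \<alpha>"
proof -
  have "\<forall>\<alpha>\<in>\<Phi>. \<exists>u\<in>S. (\<exists>u'\<in>S. u * u' = 1) \<and> x (- \<alpha>) = u * x \<alpha>"
    using setting unfolding demazure_setting_def by (elim conjE) assumption
  then show ?thesis
    using assms by blast
qed

lemma act_add: "v \<in> W \<Longrightarrow> act v (a + b) = act v a + act v b"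
  and act_mult: "v \<in> W \<Longrightarrow> act v (a * b) = act v a * act v b"
  and act_one: "v \<in> W \<Longrightarrow> act v 1 = 1"
  and act_in_S: "v \<in> W \<Longrightarrow> a \<in> S \<Longrightarrow> act v a \<in> S"
  and act_x: "v \<in> W \<Longrightarrow> \<alpha> \<in> \<Phi> \<Longrightarrow> act v (x \<alpha>) = x (v \<alpha>)"
  and act_id: "act id = id"
  using setting unfolding demazure_setting_def by blast+

lemma act_comp: "v \<in> W \<Longrightarrow> u \<in> W \<Longrightarrow> act (v \<circ> u) a = act v (act u a)"
  using setting unfolding demazure_setting_def by (metis comp_apply)

lemma act_zero: "v \<in> W \<Longrightarrow> act v 0 = 0"
  using act_add[of v 0 0] by simp

lemma act_diff: "v \<in> W \<Longrightarrow> act v (a - b) = act v a - act v b"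
  using act_add[of v "a - b" b] by (simp add: algebra_simps)

lemma act_sum: "v \<in> W \<Longrightarrow> act v (\<Sum>i\<in>A. f i) = (\<Sum>i\<in>A. act v (f i))"
  by (induction A rule: infinite_finite_induct) (simp_all add: act_zero act_add)

lemma act_act_inv: "v \<in> W \<Longrightarrow> act v (act (inv v) a) = a"
  using act_comp[of v "inv v"] by (simp add: inv_in_weyl_group weyl_group_comp_inv act_id)

lemma inv_comp_in_W: "v \<in> W \<Longrightarrow> v' \<in> W \<Longrightarrow> inv v \<circ> v' \<in> W"
  by (simp add: comp_in_weyl_group inv_in_weyl_group)

lemma weyl_act_delta:
  assumes v: "v \<in> W"
  shows "delta_act v z = (\<lambda>v'. if v' \<in> W then act v (z (inv v \<circ> v')) else 0)"
proof
  fix v'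
  show "delta_act v z v' = (if v' \<in> W then act v (z (inv v \<circ> v')) else 0)"
  proof (cases "v' \<in> W")
    case True
    have solve: "v \<circ> u = v' \<longleftrightarrow> u = inv v \<circ> v'" for u
      using weyl_group_comp_inv[OF v] by (metis comp_assoc comp_id id_comp)
    have "(\<Sum>u\<in>W. if w \<circ> u = v' then qw_delta v w * act w (z u) else 0)
        = (if w = v then (\<Sum>u\<in>W. if v \<circ> u = v' then act v (z u) else 0) else 0)" for w
      by (auto simp: qw_delta_def intro!: sum.neutral sum.cong)
    then have "delta_act v z v' = (\<Sum>u\<in>W. if v \<circ> u = v' then act v (z u) else 0)"
      using True v finite_weyl_group[OF root_system] by (simp add: weyl_act_def)
    also have "\<dots> = act v (z (inv v \<circ> v'))"
      using finite_weyl_group[OF root_system] inv_comp_in_W[OF v True] by (simp add: solve)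
    finally show ?thesis
      using True by simp
  qed (simp add: weyl_act_def)
qed

lemma delta_act_comp:
  assumes v: "v \<in> W" and u: "u \<in> W"
  shows "delta_act v (delta_act u z) = delta_act (v \<circ> u) z"
proof -
  have "inv (v \<circ> u) = inv u \<circ> inv v"
    using bij_weyl_group[OF u] bij_weyl_group[OF v] by (simp add: o_inv_distrib)
  then show ?thesis
    using v u by (auto simp: weyl_act_delta comp_in_weyl_group inv_comp_in_W act_comp o_assoc)
qed

lemma delta_act_id: "(\<And>v. v \<notin> W \<Longrightarrow> z v = 0) \<Longrightarrow> delta_act id z = z"
  by (auto simp: weyl_act_delta[OF id_in_weyl_group] act_id)

lemma hecke_delta_act:
  assumes v: "v \<in> W"
  shows "hecke W act a (delta_act v z) = delta_act v (hecke W act a z)"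
proof
  fix v'
  show "hecke W act a (delta_act v z) v' = delta_act v (hecke W act a z) v'"
  proof (cases "v' \<in> W")
    case True
    have "act v' = act v \<circ> act (inv v \<circ> v')"
      using act_comp[OF v inv_comp_in_W[OF v True]] weyl_group_comp_inv(1)[OF v]
      by (simp add: fun_eq_iff o_assoc)
    then show ?thesis
      using v True
      by (simp add: hecke_def weyl_act_delta comp_in_weyl_group inv_comp_in_W act_sum act_mult o_assoc)
  qed (simp add: hecke_def weyl_act_delta[OF v])
qed

lemma delta_act_cw_mult:
  "v \<in> W \<Longrightarrow> delta_act v (cw_mult z z') = cw_mult (delta_act v z) (delta_act v z')"
  by (auto simp: weyl_act_delta cw_mult_def act_mult)

lemma delta_act_one_tuple: "v \<in> W \<Longrightarrow> delta_act v (one_tuple W) = one_tuple W"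
  by (auto simp: weyl_act_delta one_tuple_def act_one inv_comp_in_W)

lemma delta_act_zero: "v \<in> W \<Longrightarrow> delta_act v (\<lambda>_. 0) = (\<lambda>_. 0)"
  by (auto simp: weyl_act_delta act_zero)

lemma zeta_eq_delta_act_zeta_id:
  assumes "v \<in> W"
  shows "zeta W act x c I v w = delta_act v (zeta W act x c I id w)"
proof -
  have "pt W act c v = delta_act v (pt W act c id)"
    using delta_act_comp[OF assms id_in_weyl_group] by (simp add: pt_def)
  then show ?thesis
    by (simp add: zeta_def hecke_delta_act[OF assms])
qed

lemma delta_act_preserves_duality:
  assumes "v \<in> W"
    and "hecke W act p (cw_mult (zeta W act x c I id w) z) = (if w = u then one_tuple W else (\<lambda>_. 0))"
  shows "hecke W act p (cw_mult (zeta W act x c I v w) (delta_act v z))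
      = (if w = u then one_tuple W else (\<lambda>_. 0))"
  using assms
  by (simp add: zeta_eq_delta_act_zeta_id delta_act_cw_mult[symmetric] hecke_delta_act
      delta_act_one_tuple delta_act_zero)

lemma structure_algebra_root_dvd:
  assumes z: "z \<in> Z" and w: "w \<in> W" and \<beta>: "\<beta> \<in> \<Phi>"
  shows "\<exists>s\<in>S. z (refl \<beta> \<circ> w) - z w = x \<beta> * s"
proof -
  have pos_dvd: "\<exists>s\<in>S. z (refl \<gamma> \<circ> w) - z w = x \<gamma> * s" if "\<gamma> \<in> pos_roots \<Phi> \<Delta>" for \<gamma>
    using z w that by (simp add: structure_algebra_def)
  from root_or_uminus_pos_root[OF root_system simple_system \<beta>] show ?thesis
  proof
    assume "- \<beta> \<in> pos_roots \<Phi> \<Delta>"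
    then obtain s where "s \<in> S" "z (refl \<beta> \<circ> w) - z w = x (- \<beta>) * s"
      using pos_dvd by fastforce
    moreover obtain u where "u \<in> S" "x (- \<beta>) = u * x \<beta>"
      using x_uminus[OF \<beta>] by blast
    ultimately have "u * s \<in> S" "z (refl \<beta> \<circ> w) - z w = x \<beta> * (u * s)"
      by (simp_all add: S_mult_closed mult_ac)
    then show ?thesis
      by blast
  qed (rule pos_dvd)
qed

lemma delta_act_in_structure_algebra:
  assumes v: "v \<in> W" and z: "z \<in> Z"
  shows "delta_act v z \<in> Z"
  unfolding structure_algebra_def
proof (intro CollectI conjI allI ballI impI)
  show "delta_act v z v' = 0" if "v' \<notin> W" for v'
    using that by (simp add: weyl_act_delta[OF v])
  show "delta_act v z v' \<in> S" if "v' \<in> W" for v'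
    using z that v by (simp add: weyl_act_delta[OF v] structure_algebra_def act_in_S inv_comp_in_W)
  fix w \<alpha>
  assume w: "w \<in> W" and \<alpha>: "\<alpha> \<in> pos_roots \<Phi> \<Delta>"
  then have "\<alpha> \<in> \<Phi>"
    by (simp add: pos_roots_def)
  define \<beta> where "\<beta> = inv v \<alpha>"
  have \<beta>: "\<beta> \<in> \<Phi>" and v\<beta>: "v \<beta> = \<alpha>"
    using \<open>\<alpha> \<in> \<Phi>\<close> weyl_group_permutes_roots[OF root_system inv_in_weyl_group[OF v]]
      weyl_group_comp_inv(1)[OF v]
    by (auto simp: \<beta>_def fun_eq_iff)
  have "inv v \<circ> (refl \<alpha> \<circ> w) = refl \<beta> \<circ> (inv v \<circ> w)"
    using orthogonal_transformation_comp_refl[of "inv v" \<alpha>]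
      orthogonal_transformation_weyl_group[OF inv_in_weyl_group[OF v]]
    by (simp add: \<beta>_def o_assoc)
  then have "delta_act v z (refl \<alpha> \<circ> w) - delta_act v z w
      = act v (z (refl \<beta> \<circ> (inv v \<circ> w)) - z (inv v \<circ> w))"
    using v w \<open>\<alpha> \<in> \<Phi>\<close>
    by (simp add: weyl_act_delta comp_in_weyl_group refl_in_weyl_group act_diff)
  moreover obtain s where "s \<in> S" "z (refl \<beta> \<circ> (inv v \<circ> w)) - z (inv v \<circ> w) = x \<beta> * s"
    using structure_algebra_root_dvd[OF z inv_comp_in_W[OF v w] \<beta>] by blast
  ultimately show "\<exists>s\<in>S. delta_act v z (refl \<alpha> \<circ> w) - delta_act v z w = x \<alpha> * s"
    using v \<beta> v\<beta> by (auto simp: act_mult act_x act_in_S)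
qed

lemma delta_act_inv_delta_act:
  assumes "v \<in> W" and "z \<in> Z"
  shows "delta_act v (delta_act (inv v) z) = z"
  using assms
  by (simp add: delta_act_comp inv_in_weyl_group weyl_group_comp_inv delta_act_id structure_algebra_def)

lemma delta_act_lincomb:
  "v \<in> W \<Longrightarrow>
    delta_act v (\<lambda>v'. \<Sum>i\<in>A. c i * f i v') = (\<lambda>v'. \<Sum>i\<in>A. act v (c i) * delta_act v (f i) v')"
  by (auto simp: weyl_act_delta act_sum act_mult)

lemma is_S_basis_delta_act:
  assumes v: "v \<in> W" and basis: "is_S_basis S W Z b"
  shows "is_S_basis S W Z (\<lambda>w. delta_act v (b w))"
proof (rule is_S_basis_semilinear_image[OF basis])
  have v': "inv v \<in> W" and inv_inv: "inv (inv v) = v"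
    using v by (simp_all add: inv_in_weyl_group bij_weyl_group inv_inv_eq)
  show "delta_act v z \<in> Z" "delta_act (inv v) z \<in> Z" if "z \<in> Z" for z
    using that v v' by (simp_all add: delta_act_in_structure_algebra)
  show "delta_act v (delta_act (inv v) z) = z" and "delta_act (inv v) (delta_act v z) = z"
    if "z \<in> Z" for z
    using delta_act_inv_delta_act[OF v that] delta_act_inv_delta_act[OF v' that] inv_inv by simp_all
  show "act v s \<in> S" "act (inv v) s \<in> S" if "s \<in> S" for s
    using that v v' by (simp_all add: act_in_S)
  show "act v (act (inv v) s) = s" for s
    using v by (rule act_act_inv)
  show "delta_act v (\<lambda>v'. \<Sum>i\<in>W. c i * f i v')
      = (\<lambda>v'. \<Sum>i\<in>W. act v (c i) * delta_act v (f i) v')"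
    and "delta_act (inv v) (\<lambda>v'. \<Sum>i\<in>W. c i * f i v')
      = (\<lambda>v'. \<Sum>i\<in>W. act (inv v) (c i) * delta_act (inv v) (f i) v')" for c f
    using v v' by (simp_all add: delta_act_lincomb)
qed

end

theorem lemma3p6:
  fixes \<Phi> \<Delta> :: "'v::euclidean_space set"
    and S :: "'q::comm_ring_1 set"
    and act :: "('v \<Rightarrow> 'v) \<Rightarrow> 'q \<Rightarrow> 'q"
    and x :: "'v \<Rightarrow> 'q"
    and I :: "('v \<Rightarrow> 'v) \<Rightarrow> 'v list"
  assumes setting: "demazure_setting \<Phi> \<Delta> S act x"
    and reduced: "\<forall>w\<in>weyl_group \<Phi>. reduced_word \<Delta> w (I w)"
    and known_basis: "is_S_basis S (weyl_group \<Phi>)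
                        (structure_algebra (weyl_group \<Phi>) (pos_roots \<Phi> \<Delta>) S x)
                        (zeta_dual (weyl_group \<Phi>) act x I)"
    and known_dual: "\<forall>w\<in>weyl_group \<Phi>. \<forall>u\<in>weyl_group \<Phi>.
        hecke (weyl_group \<Phi>) act (pi_elt (weyl_group \<Phi>) act (xPi \<Phi> \<Delta> x))
          (cw_mult (zeta (weyl_group \<Phi>) act x (xPi \<Phi> \<Delta> x) I id w)
                   (zeta_dual (weyl_group \<Phi>) act x I u))
        = (if w = u then one_tuple (weyl_group \<Phi>) else (\<lambda>_. 0))"
  shows "(\<forall>v\<in>weyl_group \<Phi>. \<forall>w\<in>weyl_group \<Phi>. \<forall>u\<in>weyl_group \<Phi>.
            hecke (weyl_group \<Phi>) act (pi_elt (weyl_group \<Phi>) act (xPi \<Phi> \<Delta> x))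
              (cw_mult (zeta (weyl_group \<Phi>) act x (xPi \<Phi> \<Delta> x) I v w)
                       (weyl_act (weyl_group \<Phi>) act (qw_delta v) (zeta_dual (weyl_group \<Phi>) act x I u)))
            = (if w = u then one_tuple (weyl_group \<Phi>) else (\<lambda>_. 0)))
       \<and> (\<forall>v\<in>weyl_group \<Phi>.
            is_S_basis S (weyl_group \<Phi>)
              (structure_algebra (weyl_group \<Phi>) (pos_roots \<Phi> \<Delta>) S x)
              (\<lambda>w. weyl_act (weyl_group \<Phi>) act (qw_delta v) (zeta_dual (weyl_group \<Phi>) act x I w)))"
  \<comment> \<open>The reduced words I enter only through the assumed duality and basis.\<close>
proof -
  interpret demazure \<Phi> \<Delta> S act x
    by (rule demazure.intro) (rule setting)
  show ?thesis
    by (intro conjI ballI delta_act_preserves_duality is_S_basis_delta_act known_basis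
        known_dual[rule_format])
qed

end
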